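(* Let $M\ge 2$. (i) For every prime $p$ and every $k\ge1$, $\Gamma_1(p^k)$ is a normal subgroup of $\Gamma_1(p)$. (ii) If $m$ and $n$ are positive integers with $m\mid_s n$, then $\Gamma_1(n)$ is a normal subgroup of $\Gamma_1(m)$.
   Context: For a prime power $p^k$ ($k>0$), $\Gamma_1(p^k)=\{g=(g_{ij})\in SL_M(\mathbb{Z}): p^{k-1}\mid g_{ij}\text{ for }i<j,\ p^k\mid (g_{ij}-\delta_{ij})\text{ for } i\ge j\}$. For $n=p_1^{e_1}\cdots p_s^{e_s}$, $\Gamma_1(n)=\bigcap_i\Gamma_1(p_i^{e_i})$. We write $m\mid_s n$ ("$n$ is a strong multiple of $m$") if $m\mid n$ and every prime dividing $n$ also divides $m$. *)

theory Defs
  imports "Jordan_Normal_Form.Determinant" "HOL-Algebra.Coset" "HOL-Computational_Algebra.Primes"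
begin

definition SL :: "nat \<Rightarrow> int mat set" where
  "SL M = {g \<in> carrier_mat M M. det g = 1}"

definition SL_grp :: "nat \<Rightarrow> int mat monoid" where
  "SL_grp M = \<lparr>carrier = SL M, mult = (*), one = 1\<^sub>m M\<rparr>"

definition Gamma1_pp :: "nat \<Rightarrow> nat \<Rightarrow> nat \<Rightarrow> int mat set" where
  "Gamma1_pp M p k = {g \<in> SL M.
      (\<forall>i j. i < j \<and> j < M \<longrightarrow> int p ^ (k - 1) dvd g $$ (i, j)) \<and>
      (\<forall>i j. j \<le> i \<and> i < M \<longrightarrow> int p ^ k dvd (g $$ (i, j) - (if i = j then 1 else 0)))}"

definition Gamma1 :: "nat \<Rightarrow> nat \<Rightarrow> int mat set" where
  "Gamma1 M n = SL M \<inter> (\<Inter>p \<in> prime_factors n. Gamma1_pp M p (multiplicity p n))"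

definition strong_dvd :: "nat \<Rightarrow> nat \<Rightarrow> bool" where
  "strong_dvd m n \<longleftrightarrow> m dvd n \<and> (\<forall>p. prime p \<longrightarrow> p dvd n \<longrightarrow> p dvd m)"

end

theory Submission
  imports Defs
begin

(* Write the conditions defining Gamma1(p^k) as divisibility conditions on the
   entries of g - 1: the entry (i,j) of g - 1 must be divisible by p^(k-1) above the
   diagonal and by p^k on and below it.  Matrices whose entries below the diagonal are
   divisible by p form a ring (an Iwahori order), every element of Gamma1(p) lies in it,
   and the matrices with the divisibility pattern of level k (k >= 1) form a two-sided
   ideal in it.  From the identity  x h y - 1 = x (h - 1) y + (x y - 1)  one then gets
   closure of Gamma1(p^k) under products and under conjugation by Gamma1(p).
   Closure under inverses follows from a pigeonhole argument: the inverse of x is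
   congruent modulo p^k to a power of x, and Gamma1(p^k) is closed under congruence
   modulo p^k inside SL_M(Z).  For general n, Gamma1(n) is an intersection of such
   subgroups; when n is a strong multiple of m, m and n have the same prime factors and
   every element of Gamma1(m) lies in Gamma1(p) for each of them, so part (ii) reduces
   to the prime power case. *)

lemma (in group) normal_in_subgroupI:
  assumes H: "subgroup H G" and K: "subgroup K G" and HK: "H \<subseteq> K"
    and conj: "\<And>x h. x \<in> K \<Longrightarrow> h \<in> H \<Longrightarrow> x \<otimes> h \<otimes> inv x \<in> H"
  shows "H \<lhd> G\<lparr>carrier := K\<rparr>"
proof -
  interpret GK: group "G\<lparr>carrier := K\<rparr>"
    by (rule subgroup.subgroup_is_group[OF K is_group])
  show ?thesis
    unfolding GK.normal_inv_iff
    using subgroup_incl[OF H K HK] conj m_inv_consistent[OF K] by auto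
qed

lemma (in group) inv_pow_Suc_mult:
  assumes x: "x \<in> carrier G"
  shows "inv (x [^] Suc a) \<otimes> x [^] a = inv x"
    and "a < b \<Longrightarrow> inv (x [^] Suc a) \<otimes> x [^] b = x [^] (b - Suc a)"
proof -
  show "inv (x [^] Suc a) \<otimes> x [^] a = inv x"
    using x by (simp add: inv_mult_group m_assoc)
  assume "a < b"
  then have "x [^] b = x [^] Suc a \<otimes> x [^] (b - Suc a)"
    using nat_pow_mult[OF x, of "Suc a" "b - Suc a"] by simp
  then show "inv (x [^] Suc a) \<otimes> x [^] b = x [^] (b - Suc a)"
    using x by (metis l_inv l_one m_assoc inv_closed nat_pow_closed)
qed

lemma SL_grp_simps [simp]:
  "carrier (SL_grp M) = SL M"
  "\<one>\<^bsub>SL_grp M\<^esub> = 1\<^sub>m M"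
  "x \<otimes>\<^bsub>SL_grp M\<^esub> y = x * y"
  by (simp_all add: SL_grp_def)

text \<open>SL_M(Z) is a group; inverses are adjugate matrices.\<close>
lemma SL_group: "group (SL_grp M)"
proof (rule groupI)
  fix x assume "x \<in> carrier (SL_grp M)"
  then have x: "x \<in> carrier_mat M M" "det x = 1" by (auto simp: SL_def)
  have adj: "adj_mat x \<in> carrier_mat M M" "adj_mat x * x = 1\<^sub>m M"
    using adj_mat[OF x(1)] x(2) by auto
  then have "det (adj_mat x) = 1"
    using det_mult[OF adj(1) x(1)] x(2) by simp
  then show "\<exists>y\<in>carrier (SL_grp M). y \<otimes>\<^bsub>SL_grp M\<^esub> x = \<one>\<^bsub>SL_grp M\<^esub>"
    using adj by (auto simp: SL_def)
qed (auto simp: SL_def det_mult)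

interpretation SL: group "SL_grp M" for M
  by (rule SL_group)

lemma SL_carrier_mat: "g \<in> SL M \<Longrightarrow> g \<in> carrier_mat M M"
  by (simp add: SL_def)

lemma SL_closed [simp]:
  "x \<in> SL M \<Longrightarrow> y \<in> SL M \<Longrightarrow> x * y \<in> SL M"
  "x \<in> SL M \<Longrightarrow> inv\<^bsub>SL_grp M\<^esub> x \<in> SL M"
  "x \<in> SL M \<Longrightarrow> x [^]\<^bsub>SL_grp M\<^esub> (n::nat) \<in> SL M"
  using SL.m_closed[of x M y] SL.inv_closed[of x M] SL.nat_pow_closed[of x M n] by simp_all

definition entry_dvd :: "nat \<Rightarrow> int \<Rightarrow> (nat \<Rightarrow> nat \<Rightarrow> nat) \<Rightarrow> int mat \<Rightarrow> bool" where
  "entry_dvd M q e A \<longleftrightarrow> (\<forall>i<M. \<forall>j<M. q ^ e i j dvd A $$ (i, j))"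

lemma entry_dvd_mono:
  assumes "entry_dvd M q e A" and "\<And>i j. i < M \<Longrightarrow> j < M \<Longrightarrow> f i j \<le> e i j"
  shows "entry_dvd M q f A"
  using assms unfolding entry_dvd_def by (meson dvd_trans le_imp_power_dvd)

lemma entry_dvd_add:
  assumes "A \<in> carrier_mat M M" "B \<in> carrier_mat M M" "entry_dvd M q e A" "entry_dvd M q e B"
  shows "entry_dvd M q e (A + B)"
  using assms by (simp add: entry_dvd_def)

lemma entry_dvd_diff:
  assumes "A \<in> carrier_mat M M" "B \<in> carrier_mat M M" "entry_dvd M q e A" "entry_dvd M q e B"
  shows "entry_dvd M q e (A - B)"
  using assms by (simp add: entry_dvd_def)

lemma entry_dvd_mult:
  assumes A: "A \<in> carrier_mat M M" and B: "B \<in> carrier_mat M M"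
    and dA: "entry_dvd M q e A" and dB: "entry_dvd M q f B"
    and exp: "\<And>i l j. i < M \<Longrightarrow> l < M \<Longrightarrow> j < M \<Longrightarrow> g i j \<le> e i l + f l j"
  shows "entry_dvd M q g (A * B)"
  unfolding entry_dvd_def
proof (intro allI impI)
  fix i j assume ij: "i < M" "j < M"
  have "q ^ g i j dvd A $$ (i, l) * B $$ (l, j)" if l: "l < M" for l
  proof -
    have "q ^ (e i l + f l j) dvd A $$ (i, l) * B $$ (l, j)"
      using dA dB ij l unfolding entry_dvd_def power_add by (blast intro: mult_dvd_mono)
    then show ?thesis
      using exp[OF ij(1) l ij(2)] by (meson dvd_trans le_imp_power_dvd)
  qed
  then show "q ^ g i j dvd (A * B) $$ (i, j)"
    using A B ij by (auto simp: scalar_prod_def intro: dvd_sum)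
qed

text \<open>The pattern of g - 1 for g in Gamma1(p^k), and the pattern of the Iwahori order
  (entries below the diagonal divisible by p).\<close>
definition level_exp :: "nat \<Rightarrow> nat \<Rightarrow> nat \<Rightarrow> nat" where
  "level_exp k i j = (if i < j then k - 1 else k)"

definition lower_exp :: "nat \<Rightarrow> nat \<Rightarrow> nat" where
  "lower_exp i j = (if j < i then 1 else 0)"

text \<open>For k >= 1 the level-k pattern is a two-sided ideal for the Iwahori pattern.\<close>
lemma level_exp_ideal:
  assumes "1 \<le> k"
  shows "level_exp k i j \<le> lower_exp i l + level_exp k l j"
    and "level_exp k i j \<le> level_exp k i l + lower_exp l j"
  using assms by (auto simp: level_exp_def lower_exp_def)

lemma Gamma1_pp_iff:
  "Gamma1_pp M p k = {g \<in> SL M. entry_dvd M (int p) (level_exp k) (g - 1\<^sub>m M)}"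
  by (auto simp: Gamma1_pp_def entry_dvd_def level_exp_def SL_def)

lemma Gamma1_pp_one: "1\<^sub>m M \<in> Gamma1_pp M p k"
  by (simp add: Gamma1_pp_iff entry_dvd_def SL_def)

lemma Gamma1_pp_antimono:
  assumes "k \<le> l"
  shows "Gamma1_pp M p l \<subseteq> Gamma1_pp M p k"
  using assms by (auto simp: Gamma1_pp_iff level_exp_def elim!: entry_dvd_mono)

lemma Gamma1_pp_lower:
  assumes "g \<in> Gamma1_pp M p 1"
  shows "entry_dvd M (int p) lower_exp g"
  unfolding entry_dvd_def lower_exp_def
proof (intro allI impI)
  fix i j assume "i < M" "j < M"
  show "int p ^ (if j < i then 1 else 0) dvd g $$ (i, j)"
  proof (cases "j < i")
    case True
    then have "j \<le> i \<and> i < M" using \<open>i < M\<close> by simp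
    then have "int p ^ 1 dvd g $$ (i, j) - (if i = j then 1 else 0)"
      using assms unfolding Gamma1_pp_def by blast
    with True show ?thesis by simp
  qed simp
qed

lemma sandwich_minus_one:
  fixes x h y :: "int mat"
  assumes "x \<in> carrier_mat M M" "h \<in> carrier_mat M M" "y \<in> carrier_mat M M"
  shows "x * h * y - 1\<^sub>m M = x * (h - 1\<^sub>m M) * y + (x * y - 1\<^sub>m M)"
proof -
  have "x * (h - 1\<^sub>m M) * y = x * h * y - x * y"
    using assms by (simp add: mult_minus_distrib_mat minus_mult_distrib_mat[of _ M M])
  then show ?thesis
    using assms by (intro eq_matI) auto
qed

lemma Gamma1_pp_sandwich:
  assumes k: "1 \<le> k" and x: "x \<in> Gamma1_pp M p 1" and y: "y \<in> Gamma1_pp M p 1"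
    and h: "h \<in> Gamma1_pp M p k" and xy: "x * y \<in> Gamma1_pp M p k"
  shows "x * h * y \<in> Gamma1_pp M p k"
proof -
  have SL: "x \<in> SL M" "y \<in> SL M" "h \<in> SL M"
    using x y h by (auto simp: Gamma1_pp_def)
  then have carr: "x \<in> carrier_mat M M" "y \<in> carrier_mat M M" "h \<in> carrier_mat M M"
    by (auto simp: SL_def)
  have "entry_dvd M (int p) (level_exp k) (h - 1\<^sub>m M)"
    using h by (simp add: Gamma1_pp_iff)
  then have "entry_dvd M (int p) (level_exp k) (x * (h - 1\<^sub>m M))"
    using carr by (intro entry_dvd_mult[OF _ _ Gamma1_pp_lower[OF x] _ level_exp_ideal(1)[OF k]]) auto
  then have "entry_dvd M (int p) (level_exp k) (x * (h - 1\<^sub>m M) * y)"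
    using carr by (intro entry_dvd_mult[OF _ _ _ Gamma1_pp_lower[OF y] level_exp_ideal(2)[OF k]]) auto
  then have "entry_dvd M (int p) (level_exp k) (x * h * y - 1\<^sub>m M)"
    unfolding sandwich_minus_one[OF carr(1,3,2)]
    using carr xy by (intro entry_dvd_add) (auto simp: Gamma1_pp_iff)
  moreover have "x * h * y \<in> SL M"
    using SL by simp
  ultimately show ?thesis
    by (simp add: Gamma1_pp_iff)
qed

lemma Gamma1_pp_mult:
  assumes k: "1 \<le> k" and g: "g \<in> Gamma1_pp M p k" and h: "h \<in> Gamma1_pp M p k"
  shows "g * h \<in> Gamma1_pp M p k"
proof -
  have g1: "g \<in> Gamma1_pp M p 1" using g Gamma1_pp_antimono[OF k] by blast
  have "g \<in> carrier_mat M M" "h \<in> carrier_mat M M"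
    using g h by (auto simp: Gamma1_pp_def SL_def)
  then show ?thesis
    using Gamma1_pp_sandwich[OF k g1 Gamma1_pp_one h] g by simp
qed

definition mat_cong :: "nat \<Rightarrow> int \<Rightarrow> int mat \<Rightarrow> int mat \<Rightarrow> bool" where
  "mat_cong M q A B \<longleftrightarrow> (\<forall>i<M. \<forall>j<M. q dvd A $$ (i, j) - B $$ (i, j))"

lemma mat_cong_sym: "mat_cong M q A B \<Longrightarrow> mat_cong M q B A"
  unfolding mat_cong_def by (metis dvd_diff_commute)

lemma mat_cong_mult_left:
  assumes C: "C \<in> carrier_mat M M" and A: "A \<in> carrier_mat M M" and B: "B \<in> carrier_mat M M"
    and AB: "mat_cong M q A B"
  shows "mat_cong M q (C * A) (C * B)"
proof -
  have "entry_dvd M q (\<lambda>_ _. 1) (A - B)"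
    using AB A B by (simp add: mat_cong_def entry_dvd_def)
  then have "entry_dvd M q (\<lambda>_ _. 1) (C * (A - B))"
    using A B C by (intro entry_dvd_mult[where e = "\<lambda>_ _. 0"]) (auto simp: entry_dvd_def)
  then show ?thesis
    using A B C by (simp add: mat_cong_def entry_dvd_def mult_minus_distrib_mat)
qed

lemma mat_cong_pigeonhole:
  fixes f :: "nat \<Rightarrow> int mat"
  assumes q: "0 < q"
  shows "\<exists>a b. a < b \<and> mat_cong M q (f a) (f b)"
proof -
  define red where
    "red t = (\<lambda>(i, j). if i < M \<and> j < M then f t $$ (i, j) mod q else 0)" for t
  let ?I = "{0..<M} \<times> {0..<M}"
  let ?S = "{r. \<forall>z. (z \<in> ?I \<longrightarrow> r z \<in> {0..<q}) \<and> (z \<notin> ?I \<longrightarrow> r z = 0)}"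
  have "finite ?S"
    by (rule finite_set_of_finite_funs) auto
  moreover have "range red \<subseteq> ?S"
    using q by (auto simp: red_def)
  ultimately have "\<not> inj red"
    using finite_subset finite_imageD infinite_UNIV_nat by blast
  then obtain a b where "a \<noteq> b" "red a = red b"
    unfolding inj_def by blast
  moreover have "mat_cong M q (f a) (f b)" if "red a = red b" for a b
    unfolding mat_cong_def
  proof (intro allI impI)
    fix i j assume "i < M" "j < M"
    with that have "red a (i, j) = red b (i, j)" by simp
    with \<open>i < M\<close> \<open>j < M\<close> show "q dvd f a $$ (i, j) - f b $$ (i, j)"
      by (simp add: red_def mod_eq_dvd_iff)
  qed
  ultimately show ?thesis
    by (metis linorder_neq_iff mat_cong_sym)
qed

lemma SL_inv_cong_power:
  assumes x: "x \<in> SL M" and q: "0 < q"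
  shows "\<exists>r::nat. mat_cong M q (inv\<^bsub>SL_grp M\<^esub> x) (x [^]\<^bsub>SL_grp M\<^esub> r)"
proof -
  let ?G = "SL_grp M"
  obtain a b :: nat where ab: "a < b" "mat_cong M q (x [^]\<^bsub>?G\<^esub> a) (x [^]\<^bsub>?G\<^esub> b)"
    using mat_cong_pigeonhole[OF q, of M "\<lambda>t. x [^]\<^bsub>?G\<^esub> t"] by blast
  define y where "y = inv\<^bsub>?G\<^esub> (x [^]\<^bsub>?G\<^esub> Suc a)"
  have "y \<in> SL M"
    using x by (simp add: y_def)
  moreover have "y * x [^]\<^bsub>?G\<^esub> a = inv\<^bsub>?G\<^esub> x"
    using SL.inv_pow_Suc_mult(1)[of x M a] x by (simp add: y_def)
  moreover have "y * x [^]\<^bsub>?G\<^esub> b = x [^]\<^bsub>?G\<^esub> (b - Suc a)"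
    using SL.inv_pow_Suc_mult(2)[of x M a b] x ab(1) by (simp add: y_def)
  moreover have "mat_cong M q (y * x [^]\<^bsub>?G\<^esub> a) (y * x [^]\<^bsub>?G\<^esub> b)"
    using calculation(1) x ab(2) by (intro mat_cong_mult_left) (auto intro: SL_carrier_mat)
  ultimately show ?thesis
    by auto
qed

lemma SL_subgroup_of_cong_closed:
  assumes sub: "K \<subseteq> SL M" and one: "1\<^sub>m M \<in> K"
    and mult: "\<And>x y. x \<in> K \<Longrightarrow> y \<in> K \<Longrightarrow> x * y \<in> K"
    and q: "0 < q" and cong: "\<And>x y. x \<in> K \<Longrightarrow> y \<in> SL M \<Longrightarrow> mat_cong M q x y \<Longrightarrow> y \<in> K"
  shows "subgroup K (SL_grp M)"
proof (rule SL.subgroupI)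
  fix x assume x: "x \<in> K"
  then have xSL: "x \<in> SL M" using sub by blast
  have pow: "x [^]\<^bsub>SL_grp M\<^esub> (n::nat) \<in> K" for n
    by (induction n) (simp_all add: one mult x)
  obtain r :: nat where "mat_cong M q (inv\<^bsub>SL_grp M\<^esub> x) (x [^]\<^bsub>SL_grp M\<^esub> r)"
    using SL_inv_cong_power[OF xSL q] by blast
  then show "inv\<^bsub>SL_grp M\<^esub> x \<in> K"
    using cong[OF pow _ mat_cong_sym] xSL by simp
qed (use sub one mult in auto)

lemma Gamma1_pp_cong:
  assumes x: "x \<in> Gamma1_pp M p k" and y: "y \<in> SL M" and xy: "mat_cong M (int p ^ k) x y"
  shows "y \<in> Gamma1_pp M p k"
proof -
  have carr: "x \<in> carrier_mat M M" "y \<in> carrier_mat M M"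
    using x y by (auto simp: Gamma1_pp_def SL_def)
  have "entry_dvd M (int p) (\<lambda>_ _. k) (x - y)"
    using xy carr by (simp add: mat_cong_def entry_dvd_def)
  then have xy_dvd: "entry_dvd M (int p) (level_exp k) (x - y)"
    by (rule entry_dvd_mono) (simp add: level_exp_def)
  have x_dvd: "entry_dvd M (int p) (level_exp k) (x - 1\<^sub>m M)"
    using x by (simp add: Gamma1_pp_iff)
  have "entry_dvd M (int p) (level_exp k) ((x - 1\<^sub>m M) - (x - y))"
    using carr by (intro entry_dvd_diff[OF _ _ x_dvd xy_dvd]) auto
  moreover have "(x - 1\<^sub>m M) - (x - y) = y - 1\<^sub>m M"
    using carr by (intro eq_matI) auto
  ultimately have "entry_dvd M (int p) (level_exp k) (y - 1\<^sub>m M)"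
    by simp
  with y show ?thesis
    by (simp add: Gamma1_pp_iff)
qed

lemma Gamma1_pp_subgroup:
  assumes p: "0 < p" and k: "1 \<le> k"
  shows "subgroup (Gamma1_pp M p k) (SL_grp M)"
proof (rule SL_subgroup_of_cong_closed)
  show "Gamma1_pp M p k \<subseteq> SL M" by (auto simp: Gamma1_pp_def)
  show "0 < int p ^ k" using p by simp
qed (auto intro: Gamma1_pp_one Gamma1_pp_mult[OF k] Gamma1_pp_cong)

lemma Gamma1_pp_conj:
  assumes p: "0 < p" and k: "1 \<le> k" and x: "x \<in> Gamma1_pp M p 1" and h: "h \<in> Gamma1_pp M p k"
  shows "x \<otimes>\<^bsub>SL_grp M\<^esub> h \<otimes>\<^bsub>SL_grp M\<^esub> inv\<^bsub>SL_grp M\<^esub> x \<in> Gamma1_pp M p k"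
proof -
  interpret G1: subgroup "Gamma1_pp M p 1" "SL_grp M"
    using Gamma1_pp_subgroup[OF p order.refl] .
  have "x \<in> SL M"
    using x by (simp add: Gamma1_pp_def)
  then have "x * inv\<^bsub>SL_grp M\<^esub> x = 1\<^sub>m M"
    using SL.r_inv[of x M] by simp
  then show ?thesis
    using Gamma1_pp_sandwich[OF k x G1.m_inv_closed[OF x] h] Gamma1_pp_one by simp
qed

lemma prime_factor_facts:
  fixes p n :: nat
  assumes "p \<in> prime_factors n"
  shows "0 < p" and "1 \<le> multiplicity p n"
  using assms prime_gt_0_nat by (auto simp: in_prime_factors_iff prime_factors_multiplicity)

lemma Gamma1_iff:
  "g \<in> Gamma1 M n \<longleftrightarrow> g \<in> SL M \<and> (\<forall>p \<in> prime_factors n. g \<in> Gamma1_pp M p (multiplicity p n))"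
  unfolding Gamma1_def by blast

lemma Gamma1_subgroup: "subgroup (Gamma1 M n) (SL_grp M)"
proof -
  let ?A = "insert (SL M) ((\<lambda>p. Gamma1_pp M p (multiplicity p n)) ` prime_factors n)"
  have "subgroup (\<Inter>?A) (SL_grp M)"
  proof (rule SL.subgroups_Inter)
    fix H assume "H \<in> ?A"
    then consider "H = SL M"
      | p where "p \<in> prime_factors n" "H = Gamma1_pp M p (multiplicity p n)"
      by blast
    then show "subgroup H (SL_grp M)"
    proof cases
      case 1
      then show ?thesis using SL.subgroup_self[of M] by simp
    next
      case (2 p)
      then show ?thesis using Gamma1_pp_subgroup prime_factor_facts by blast
    qed
  qed simp
  moreover have "\<Inter>?A = Gamma1 M n"
    by (auto simp: Gamma1_def)
  ultimately show ?thesis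
    by simp
qed

lemma Gamma1_sub_Gamma1_pp:
  assumes p: "p \<in> prime_factors n"
  shows "Gamma1 M n \<subseteq> Gamma1_pp M p 1"
proof
  fix g assume "g \<in> Gamma1 M n"
  then have "g \<in> Gamma1_pp M p (multiplicity p n)"
    using p by (simp add: Gamma1_iff)
  then show "g \<in> Gamma1_pp M p 1"
    using Gamma1_pp_antimono[OF prime_factor_facts(2)[OF p]] by blast
qed

lemma strong_dvd_prime_factors:
  assumes "0 < n" and "strong_dvd m n"
  shows "prime_factors m = prime_factors n"
    and "p \<in> prime_factors m \<Longrightarrow> multiplicity p m \<le> multiplicity p n"
proof -
  have "m dvd n" and "\<And>p. prime p \<Longrightarrow> p dvd n \<Longrightarrow> p dvd m"
    using assms(2) by (auto simp: strong_dvd_def)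
  moreover have "m \<noteq> 0"
    using \<open>m dvd n\<close> assms(1) by auto
  ultimately show "prime_factors m = prime_factors n"
    using assms(1) by (auto simp: in_prime_factors_iff intro: dvd_trans)
  show "multiplicity p m \<le> multiplicity p n" if "p \<in> prime_factors m"
    using \<open>m dvd n\<close> assms(1) that by (intro dvd_imp_multiplicity_le) auto
qed

lemma Gamma1_strong_dvd_subset:
  assumes "0 < n" and "strong_dvd m n"
  shows "Gamma1 M n \<subseteq> Gamma1 M m"
proof
  fix g assume g: "g \<in> Gamma1 M n"
  have "g \<in> Gamma1_pp M p (multiplicity p m)" if p: "p \<in> prime_factors m" for p
  proof -
    have "g \<in> Gamma1_pp M p (multiplicity p n)"
      using g p strong_dvd_prime_factors(1)[OF assms] by (simp add: Gamma1_iff)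
    then show ?thesis
      using Gamma1_pp_antimono[OF strong_dvd_prime_factors(2)[OF assms p]] by blast
  qed
  with g show "g \<in> Gamma1 M m"
    by (simp add: Gamma1_iff)
qed

lemma Gamma1_conj:
  assumes pf: "prime_factors n \<subseteq> prime_factors m" and x: "x \<in> Gamma1 M m" and h: "h \<in> Gamma1 M n"
  shows "x \<otimes>\<^bsub>SL_grp M\<^esub> h \<otimes>\<^bsub>SL_grp M\<^esub> inv\<^bsub>SL_grp M\<^esub> x \<in> Gamma1 M n"
proof -
  have "x \<otimes>\<^bsub>SL_grp M\<^esub> h \<otimes>\<^bsub>SL_grp M\<^esub> inv\<^bsub>SL_grp M\<^esub> x \<in> Gamma1_pp M p (multiplicity p n)"
    if p: "p \<in> prime_factors n" for p
  proof (rule Gamma1_pp_conj)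
    show "0 < p" "1 \<le> multiplicity p n" using p by (rule prime_factor_facts)+
    show "x \<in> Gamma1_pp M p 1" using Gamma1_sub_Gamma1_pp p pf x by blast
    show "h \<in> Gamma1_pp M p (multiplicity p n)" using p h by (simp add: Gamma1_iff)
  qed
  moreover have "x \<otimes>\<^bsub>SL_grp M\<^esub> h \<otimes>\<^bsub>SL_grp M\<^esub> inv\<^bsub>SL_grp M\<^esub> x \<in> SL M"
    using x h by (simp add: Gamma1_iff)
  ultimately show ?thesis
    by (simp add: Gamma1_iff)
qed

theorem mainTheorem4:
  fixes M :: nat
  assumes "M \<ge> 2"
  shows "(\<forall>p k. prime p \<and> k \<ge> 1 \<longrightarrow>
            normal (Gamma1_pp M p k) ((SL_grp M)\<lparr>carrier := Gamma1_pp M p 1\<rparr>)) \<and>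
         (\<forall>m n. 0 < m \<and> 0 < n \<and> strong_dvd m n \<longrightarrow>
            normal (Gamma1 M n) ((SL_grp M)\<lparr>carrier := Gamma1 M m\<rparr>))"
proof (intro conjI allI impI)
  fix p k :: nat
  assume "prime p \<and> k \<ge> 1"
  then have p: "0 < p" and k: "1 \<le> k"
    by (auto simp: prime_gt_0_nat)
  show "normal (Gamma1_pp M p k) ((SL_grp M)\<lparr>carrier := Gamma1_pp M p 1\<rparr>)"
    by (rule SL.normal_in_subgroupI[OF Gamma1_pp_subgroup[OF p k] Gamma1_pp_subgroup[OF p order.refl]
          Gamma1_pp_antimono[OF k] Gamma1_pp_conj[OF p k]])
next
  fix m n :: nat
  assume "0 < m \<and> 0 < n \<and> strong_dvd m n"
  then have n: "0 < n" and mn: "strong_dvd m n"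
    by auto
  show "normal (Gamma1 M n) ((SL_grp M)\<lparr>carrier := Gamma1 M m\<rparr>)"
    by (rule SL.normal_in_subgroupI[OF Gamma1_subgroup Gamma1_subgroup
          Gamma1_strong_dvd_subset[OF n mn] Gamma1_conj])
      (use strong_dvd_prime_factors(1)[OF n mn] in auto)
qed

end
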